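(* Let $d\ge 3$, $n\ge 2$, and let $F$ be an $n$-lattice framework in $\mathbb{R}^d$. Suppose that for every $1\le i\le d$ and every $0\le c\le n-1$, the subframework $F_{i,c}$ has a bar between every pair of its joints. Then $F$ is infinitesimally rigid.
   Context: A framework in $\mathbb{R}^d$ is a finite graph whose vertices (joints) are distinct points of $\mathbb{R}^d$ and whose edges (bars) are segments between pairs of joints. An infinitesimal motion of $\mathbb{R}^d$ is a map $f:\mathbb{R}^d\to\mathbb{R}^d$ with $(f(x)-f(y))\cdot(x-y)=0$ for all $x,y$. For a framework $F$ with joint set $X$, an infinitesimal motion of $F$ is a map $g:X\to\mathbb{R}^d$ with $(g(x)-g(y))\cdot(x-y)=0$ for every bar $xy$; $F$ is infinitesimally rigid if every infinitesimal motion of $F$ is the restriction to $X$ of an infinitesimal motion of $\mathbb{R}^d$. An $n$-lattice framework in $\mathbb{R}^d$ is a framework whose joints are the points $(x_1,\ldots,x_d)$ with all $x_i\in\{0,1,\ldots,n-1\}$ (bars arbitrary). For such $F$, $F_{i,c}$ denotes the subframework induced by all joints whose $i$-th coordinate equals $c$ (all bars of $F$ between such joints). *)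

theory Defs
  imports "HOL-Analysis.Analysis"
begin

definition lattice_joints :: "nat \<Rightarrow> (real^'d) set" where
  "lattice_joints n = {x. \<forall>i. x $ i \<in> real ` {0..<n}}"

definition is_framework :: "(real^'d) set \<Rightarrow> (real^'d) set set \<Rightarrow> bool" where
  "is_framework X B \<longleftrightarrow> finite X \<and> (\<forall>b\<in>B. \<exists>x y. x \<in> X \<and> y \<in> X \<and> x \<noteq> y \<and> b = {x, y})"

definition lattice_framework :: "nat \<Rightarrow> (real^'d) set set \<Rightarrow> bool" where
  "lattice_framework n B \<longleftrightarrow> is_framework (lattice_joints n) B"

definition inf_motion_space :: "(real^'d \<Rightarrow> real^'d) \<Rightarrow> bool" where
  "inf_motion_space f \<longleftrightarrow> (\<forall>x y. (f x - f y) \<bullet> (x - y) = 0)"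

definition inf_motion_fw :: "(real^'d) set \<Rightarrow> (real^'d) set set \<Rightarrow> (real^'d \<Rightarrow> real^'d) \<Rightarrow> bool" where
  "inf_motion_fw X B g \<longleftrightarrow> (\<forall>x\<in>X. \<forall>y\<in>X. {x, y} \<in> B \<longrightarrow> (g x - g y) \<bullet> (x - y) = 0)"

definition inf_rigid :: "(real^'d) set \<Rightarrow> (real^'d) set set \<Rightarrow> bool" where
  "inf_rigid X B \<longleftrightarrow> (\<forall>g. inf_motion_fw X B g \<longrightarrow>
      (\<exists>f. inf_motion_space f \<and> (\<forall>x\<in>X. f x = g x)))"

definition slice_joints :: "nat \<Rightarrow> 'd \<Rightarrow> nat \<Rightarrow> (real^'d) set" where
  "slice_joints n i c = {x \<in> lattice_joints n. x $ i = real c}"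

end

theory Submission
  imports Defs
begin

text \<open>Any two lattice points agreeing in a coordinate lie in a common complete slice, so they
  are joined by a bar; as \<open>d \<ge> 3\<close>, this applies to \<open>0\<close>, \<open>e\<^sub>l\<close>, \<open>e\<^sub>m\<close>, which agree in a third
  coordinate. Hence the vectors \<open>g e\<^sub>l - g 0\<close> form the columns of a skew-symmetric matrix \<open>A\<close>,
  and \<open>x \<mapsto> g 0 + A x\<close> is an infinitesimal motion of space agreeing with \<open>g\<close> at \<open>0\<close> and at
  the unit vectors. The difference \<open>h\<close> of the two is still a motion of the bars and vanishes
  at these points. On a coordinate hyperplane \<open>x\<^sub>k = 0\<close> the bars to \<open>0\<close> and \<open>e\<^sub>m\<close> force \<open>h x\<close>
  to be parallel to \<open>e\<^sub>k\<close>; a triangle of three such points, lying on three different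
  hyperplanes, forces it to vanish. Finally, a general \<open>x\<close> is joined to two points of a
  coordinate hyperplane differing by \<open>e\<^sub>k\<close>, so \<open>h x \<bullet> e\<^sub>k = 0\<close> for every \<open>k\<close>.\<close>

lemma exists_index_avoiding:
  assumes "CARD('d::finite) \<ge> 3"
  shows "\<exists>i::'d. i \<noteq> j \<and> i \<noteq> k"
proof (rule ccontr)
  assume "\<not> ?thesis"
  then have "(UNIV::'d set) \<subseteq> {j, k}" by auto
  then have "CARD('d) \<le> card {j, k}" by (simp add: card_mono)
  also have "\<dots> \<le> 2" by (simp add: card_insert_le_m1)
  finally show False using assms by simp
qed

lemma skew_matrix_inf_motion:
  fixes A :: "real^'n^'n"
  assumes "transpose A = - A"
  shows "inf_motion_space (\<lambda>x. a + A *v x)"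
proof -
  have "(A *v w) \<bullet> w = 0" for w
  proof -
    have "w v* A = transpose A *v w" by simp
    also have "\<dots> = - (A *v w)"
      using assms by (simp add: matrix_vector_mult_def vec_eq_iff sum_negf)
    finally have "(A *v w) \<bullet> w = - (w \<bullet> (A *v w))"
      by (metis dot_lmul_matrix inner_commute inner_minus_left)
    then show ?thesis by (simp add: inner_commute)
  qed
  then show ?thesis
    by (simp add: inf_motion_space_def flip: matrix_vector_mult_diff_distrib)
qed

lemma zero_in_lattice_joints: "n \<ge> 1 \<Longrightarrow> 0 \<in> lattice_joints n"
  by (force simp: lattice_joints_def)

lemma lattice_joints_replace_by_0_1:
  assumes "n \<ge> 2" "x \<in> lattice_joints n" "\<forall>m. y $ m = x $ m \<or> y $ m = 0 \<or> y $ m = 1"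
  shows "y \<in> lattice_joints n"
proof -
  have "0 \<in> real ` {0..<n}" "1 \<in> real ` {0..<n}"
    using assms(1) by (auto intro!: image_eqI[where x = 0] image_eqI[where x = 1])
  then have "y $ m \<in> real ` {0..<n}" for m
    using assms(2) assms(3)[rule_format, of m] by (auto simp: lattice_joints_def)
  then show ?thesis by (simp add: lattice_joints_def)
qed

lemma axis_in_lattice_joints: "n \<ge> 2 \<Longrightarrow> axis l 1 \<in> lattice_joints n"
  by (rule lattice_joints_replace_by_0_1[OF _ zero_in_lattice_joints]) (auto simp: axis_def)

definition inf_motion_slices :: "nat \<Rightarrow> (real^'d \<Rightarrow> real^'d) \<Rightarrow> bool" where
  "inf_motion_slices n g \<longleftrightarrow> (\<forall>x\<in>lattice_joints n. \<forall>y\<in>lattice_joints n. \<forall>i.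
      x $ i = y $ i \<longrightarrow> (g x - g y) \<bullet> (x - y) = 0)"

lemma inf_motion_slicesD:
  "inf_motion_slices n g \<Longrightarrow> x \<in> lattice_joints n \<Longrightarrow> y \<in> lattice_joints n \<Longrightarrow>
    x $ i = y $ i \<Longrightarrow> (g x - g y) \<bullet> (x - y) = 0"
  unfolding inf_motion_slices_def by blast

lemma inf_motion_slices_if_complete_slices:
  fixes g :: "real^'d \<Rightarrow> real^'d"
  assumes "inf_motion_fw (lattice_joints n) B g"
    and "\<forall>i c. c < n \<longrightarrow> (\<forall>x\<in>slice_joints n i c. \<forall>y\<in>slice_joints n i c.
            x \<noteq> y \<longrightarrow> {x, y} \<in> B)"
  shows "inf_motion_slices n g"
  unfolding inf_motion_slices_def
proof (intro ballI allI impI)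
  fix x y :: "real^'d" and i
  assume x: "x \<in> lattice_joints n" and y: "y \<in> lattice_joints n" and xy: "x $ i = y $ i"
  show "(g x - g y) \<bullet> (x - y) = 0"
  proof (cases "x = y")
    case False
    from x obtain c where "c < n" "x $ i = real c" by (force simp: lattice_joints_def)
    with x y xy have "x \<in> slice_joints n i c" "y \<in> slice_joints n i c"
      by (auto simp: slice_joints_def)
    with \<open>c < n\<close> False assms(2) have "{x, y} \<in> B" by blast
    with assms(1) x y show ?thesis unfolding inf_motion_fw_def by blast
  qed simp
qed

lemma inf_motion_slices_diff:
  assumes "inf_motion_slices n g" "inf_motion_space f"
  shows "inf_motion_slices n (\<lambda>x. g x - f x)"
proof -
  have "(g x - f x - (g y - f y)) \<bullet> (x - y) = (g x - g y) \<bullet> (x - y) - (f x - f y) \<bullet> (x - y)"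
    for x y by (simp add: algebra_simps inner_diff_left)
  with assms show ?thesis
    unfolding inf_motion_slices_def inf_motion_space_def by simp
qed

lemma inf_motion_slices_axis_skew:
  assumes "CARD('d) \<ge> 3" "n \<ge> 2" and g: "inf_motion_slices n (g :: real^'d \<Rightarrow> real^'d)"
  shows "(g (axis l 1) - g 0) $ m = - (g (axis m 1) - g 0) $ l"
proof -
  obtain k where k: "k \<noteq> l" "k \<noteq> m" using exists_index_avoiding[OF assms(1)] by blast
  have e: "axis j 1 \<in> lattice_joints n" for j using assms(2) by (rule axis_in_lattice_joints)
  have z: "0 \<in> lattice_joints n" using assms(2) by (simp add: zero_in_lattice_joints)
  have diag: "(g (axis j 1) - g 0) $ j = 0" if "j \<noteq> k" for j
  proof -
    have "(g (axis j 1) - g 0) \<bullet> (axis j 1 - 0) = 0"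
      using inf_motion_slicesD[OF g e z, where i = k] that by (simp add: axis_def)
    then show ?thesis by (simp add: inner_axis)
  qed
  have "(g (axis l 1) - g (axis m 1)) \<bullet> (axis l 1 - axis m 1) = 0"
    using inf_motion_slicesD[OF g e e, where i = k] k by (simp add: axis_def)
  then have "(g (axis l 1) - g 0 - (g (axis m 1) - g 0)) \<bullet> (axis l 1 - axis m 1) = 0"
    by simp
  with diag k show ?thesis
    by (cases "l = m") (auto simp: inner_diff_right inner_axis)
qed

locale pinned_slice_motion =
  fixes n :: nat and h :: "real^'d \<Rightarrow> real^'d"
  assumes three_dims: "CARD('d) \<ge> 3"
    and two_layers: "n \<ge> 2"
    and motion: "inf_motion_slices n h"
    and zero: "h 0 = 0"
    and axis: "h (axis l 1) = 0"
begin

lemma other_index: "\<exists>i::'d. i \<noteq> j \<and> i \<noteq> k"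
  using exists_index_avoiding[OF three_dims] .

lemma parallel_axis_on_hyperplane:
  assumes x: "x \<in> lattice_joints n" and "x $ k = 0"
  shows "h x = axis k (h x $ k)"
proof -
  have "h x $ m = 0" if "m \<noteq> k" for m
  proof -
    have "h x \<bullet> (x - 0) = 0"
      using inf_motion_slicesD[OF motion x zero_in_lattice_joints, of k] assms two_layers zero
      by simp
    moreover have "h x \<bullet> (x - axis m 1) = 0"
      using inf_motion_slicesD[OF motion x axis_in_lattice_joints, of k] assms two_layers axis that
      by (simp add: axis_def)
    ultimately have "h x \<bullet> axis m 1 = 0"
      by (simp add: inner_diff_right)
    then show ?thesis by (simp add: inner_axis)
  qed
  then show ?thesis by (auto simp: vec_eq_iff axis_def)
qed

lemma vanishes_on_hyperplane:
  assumes x: "x \<in> lattice_joints n" and xk: "x $ k = 0"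
  shows "h x = 0"
proof -
  obtain i where i: "i \<noteq> k" using other_index by blast
  obtain j where j: "j \<noteq> i" "j \<noteq> k" using other_index by blast
  define y where "y = (\<chi> m. if m = j then 0 else if m = k then 1 else x $ m)"
  define z where "z = (\<chi> m. if m = i then 0 else if m = k then 1 else x $ m)"
  have y: "y \<in> lattice_joints n" and z: "z \<in> lattice_joints n"
    using lattice_joints_replace_by_0_1[OF two_layers x] by (auto simp: y_def z_def)
  define a b c where "a = h x $ k" and "b = h y $ j" and "c = h z $ i"
  have hx: "h x = axis k a" using parallel_axis_on_hyperplane[OF x xk] by (simp add: a_def)
  have hy: "h y = axis j b" using parallel_axis_on_hyperplane[OF y] by (simp add: y_def b_def)
  have hz: "h z = axis i c" using parallel_axis_on_hyperplane[OF z] by (simp add: z_def c_def)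
  have "(axis k a - axis j b) \<bullet> (x - y) = 0"
    using inf_motion_slicesD[OF motion x y, of i] i j by (simp add: y_def flip: hx hy)
  then have "a + b * x $ j = 0"
    using i j xk by (simp add: inner_diff_left inner_axis' y_def)
  moreover have "(axis k a - axis i c) \<bullet> (x - z) = 0"
    using inf_motion_slicesD[OF motion x z, of j] i j by (simp add: z_def flip: hx hz)
  then have "a + c * x $ i = 0"
    using i j xk by (simp add: inner_diff_left inner_axis' z_def)
  moreover have "(axis j b - axis i c) \<bullet> (y - z) = 0"
    using inf_motion_slicesD[OF motion y z, of k] i j by (simp add: y_def z_def flip: hy hz)
  then have "b * x $ j + c * x $ i = 0"
    using i j by (simp add: inner_diff_left inner_axis' y_def z_def)
  ultimately have "a = 0" by linarith
  then show ?thesis by (simp add: hx)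
qed

lemma vanishes:
  assumes x: "x \<in> lattice_joints n"
  shows "h x = 0"
proof -
  have "h x $ k = 0" for k
  proof -
    obtain l where l: "l \<noteq> k" using other_index by blast
    obtain i where i: "i \<noteq> k" "i \<noteq> l" using other_index by blast
    define p where "p = (\<chi> m. if m = k \<or> m = l then 0 else x $ m)"
    define q where "q = (\<chi> m. if m = k then 1 else if m = l then 0 else x $ m)"
    have p: "p \<in> lattice_joints n" and q: "q \<in> lattice_joints n"
      using lattice_joints_replace_by_0_1[OF two_layers x] by (auto simp: p_def q_def)
    have "h p = 0" using vanishes_on_hyperplane[OF p, of l] by (simp add: p_def)
    then have "h x \<bullet> (x - p) = 0"
      using inf_motion_slicesD[OF motion x p, of i] i by (simp add: p_def)
    moreover have "h q = 0" using vanishes_on_hyperplane[OF q, of l] l by (simp add: q_def)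
    then have "h x \<bullet> (x - q) = 0"
      using inf_motion_slicesD[OF motion x q, of i] i by (simp add: q_def)
    ultimately have "h x \<bullet> (q - p) = 0" by (simp add: inner_diff_right)
    moreover have "q - p = axis k 1" using l by (simp add: vec_eq_iff axis_def p_def q_def)
    ultimately show ?thesis by (simp add: inner_axis)
  qed
  then show ?thesis by (simp add: vec_eq_iff)
qed

end

lemma inf_motion_slices_rigid:
  assumes "CARD('d) \<ge> 3" "n \<ge> 2" and g: "inf_motion_slices n (g :: real^'d \<Rightarrow> real^'d)"
  shows "\<exists>f. inf_motion_space f \<and> (\<forall>x\<in>lattice_joints n. f x = g x)"
proof -
  define A :: "real^'d^'d" where "A = (\<chi> m l. (g (axis l 1) - g 0) $ m)"
  define f where "f x = g 0 + A *v x" for x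
  have "transpose A = - A"
    using inf_motion_slices_axis_skew[OF assms] by (simp add: A_def transpose_def vec_eq_iff)
  then have f: "inf_motion_space f"
    unfolding f_def by (rule skew_matrix_inf_motion)
  have "pinned_slice_motion n (\<lambda>x. g x - f x)"
  proof
    show "inf_motion_slices n (\<lambda>x. g x - f x)" by (rule inf_motion_slices_diff[OF g f])
    show "g (axis l 1) - f (axis l 1) = 0" for l
      by (simp add: f_def matrix_vector_mult_basis column_def A_def vec_eq_iff)
  qed (use assms in \<open>simp_all add: f_def\<close>)
  then have "\<forall>x\<in>lattice_joints n. f x = g x"
    using pinned_slice_motion.vanishes by fastforce
  with f show ?thesis by blast
qed

theorem theorem6:
  fixes n :: nat and B :: "(real^'d) set set"
  assumes "CARD('d) \<ge> 3"
    and "n \<ge> 2"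
    and "lattice_framework n B"
    and "\<forall>i c. c < n \<longrightarrow> (\<forall>x\<in>slice_joints n i c. \<forall>y\<in>slice_joints n i c.
            x \<noteq> y \<longrightarrow> {x, y} \<in> B)"
  shows "inf_rigid (lattice_joints n) B"
  \<comment> \<open>\<open>lattice_framework n B\<close> only restricts which bars may occur; rigidity does not need it.\<close>
  unfolding inf_rigid_def
  using inf_motion_slices_rigid[OF assms(1,2) inf_motion_slices_if_complete_slices[OF _ assms(4)]]
  by blast

end
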